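(* Let $k$ be a field of characteristic $0$, $Y$ a smooth variety over $k$, $p\in Y$, $x_1,\dots,x_n$ a regular system of parameters at $p$, $\mathcal I\subset\mathcal O_Y$ an ideal sheaf, and $J=(x_1^{a_1},\dots,x_k^{a_k})$ with $a_1\le\cdots\le a_k$ positive rationals and $a_1$ a positive integer. Then $J$ is $\mathcal I$-admissible if and only if $J^{(a_1-1)!}$ is $C(\mathcal I,a_1)$-admissible.
   Context: $\mathcal D^{\le j}\mathcal I$ is the ideal generated by all derivatives of order $\le j$ of local sections of $\mathcal I$. For an integer $a\ge1$, $\mathcal G(\mathcal I,a)\subseteq\mathcal O_Y[T]$ is the graded subalgebra generated by $(\mathcal D^{\le a-i}\mathcal I)T^i$, $i=1,\dots,a$, with degree-$j$ piece $\mathcal G_j=\sum\mathcal I^{b_0}(\mathcal D^{\le1}\mathcal I)^{b_1}\cdots(\mathcal D^{\le a-1}\mathcal I)^{b_{a-1}}$ over tuples of nonnegative integers with $\sum_{i=0}^{a-1}(a-i)b_i\ge j$; the coefficient ideal is $C(\mathcal I,a)=\mathcal G_{a!}$. For $\alpha\in\mathbb Q_{>0}$, $J^\alpha=(x_1^{a_1\alpha},\dots,x_k^{a_k\alpha})$. Identify $\hat{\mathcal O}_{Y,p}$ with $\kappa[[x_1,\dots,x_n]]$ ($\kappa$ a coefficient field); the monomial valuation of a center $(x_1^{c_1},\dots,x_k^{c_k})$ is $v(\sum_\alpha c_\alpha x^\alpha)=\min\{\sum_{i=1}^k\alpha_i/c_i:c_\alpha\neq0\}$, and the center is admissible for an ideal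 if this valuation is $\ge1$ on every element of the ideal (in the completion at $p$). *)

theory Defs
  imports Complex_Main
begin

text \<open>Local formal model of the completed local ring at p: the ring
  K[[x_1,...,x_n]] of formal power series in the variables x_1..x_n over a
  field K of characteristic 0.  Monomials are exponent vectors
  m :: nat => nat supported on {1..n}; a power series is a coefficient
  function on monomials vanishing off the admissible monomials.\<close>

definition mono_exps :: "nat \<Rightarrow> (nat \<Rightarrow> nat) set" where
  "mono_exps n = {m. \<forall>i. i \<notin> {1..n} \<longrightarrow> m i = 0}"

definition mps :: "nat \<Rightarrow> ((nat \<Rightarrow> nat) \<Rightarrow> 'K::field_char_0) set" where
  "mps n = {f. \<forall>m. f m \<noteq> 0 \<longrightarrow> m \<in> mono_exps n}"

definition mps_add :: "((nat \<Rightarrow> nat) \<Rightarrow> 'K::field_char_0) \<Rightarrow> ((nat \<Rightarrow> nat) \<Rightarrow> 'K) \<Rightarrow> ((nat \<Rightarrow> nat) \<Rightarrow> 'K)" where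
  "mps_add f g = (\<lambda>m. f m + g m)"

definition mps_mult :: "((nat \<Rightarrow> nat) \<Rightarrow> 'K::field_char_0) \<Rightarrow> ((nat \<Rightarrow> nat) \<Rightarrow> 'K) \<Rightarrow> ((nat \<Rightarrow> nat) \<Rightarrow> 'K)" where
  "mps_mult f g = (\<lambda>m. \<Sum>u\<in>{u. \<forall>i. u i \<le> m i}. f u * g (\<lambda>i. m i - u i))"

definition mps_deriv :: "nat \<Rightarrow> ((nat \<Rightarrow> nat) \<Rightarrow> 'K::field_char_0) \<Rightarrow> ((nat \<Rightarrow> nat) \<Rightarrow> 'K)" where
  "mps_deriv i f = (\<lambda>m. of_nat (m i + 1) * f (m(i := m i + 1)))"

definition is_mps_ideal :: "nat \<Rightarrow> ((nat \<Rightarrow> nat) \<Rightarrow> 'K::field_char_0) set \<Rightarrow> bool" where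
  "is_mps_ideal n I \<longleftrightarrow> I \<subseteq> mps n \<and> (\<lambda>_. 0) \<in> I
     \<and> (\<forall>f\<in>I. \<forall>g\<in>I. mps_add f g \<in> I)
     \<and> (\<forall>f\<in>I. \<forall>g\<in>mps n. mps_mult g f \<in> I)"

definition gen_ideal :: "nat \<Rightarrow> ((nat \<Rightarrow> nat) \<Rightarrow> 'K::field_char_0) set \<Rightarrow> ((nat \<Rightarrow> nat) \<Rightarrow> 'K) set" where
  "gen_ideal n S = \<Inter>{I. is_mps_ideal n I \<and> S \<subseteq> I}"

definition deriv_ideal :: "nat \<Rightarrow> nat \<Rightarrow> ((nat \<Rightarrow> nat) \<Rightarrow> 'K::field_char_0) set \<Rightarrow> ((nat \<Rightarrow> nat) \<Rightarrow> 'K) set" where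
  "deriv_ideal n j I = gen_ideal n
     {foldr mps_deriv ds f | ds f. length ds \<le> j \<and> set ds \<subseteq> {1..n} \<and> f \<in> I}"

definition ideal_prod :: "nat \<Rightarrow> ((nat \<Rightarrow> nat) \<Rightarrow> 'K::field_char_0) set \<Rightarrow> ((nat \<Rightarrow> nat) \<Rightarrow> 'K) set \<Rightarrow> ((nat \<Rightarrow> nat) \<Rightarrow> 'K) set" where
  "ideal_prod n I J = gen_ideal n {mps_mult f g | f g. f \<in> I \<and> g \<in> J}"

primrec ideal_pow :: "nat \<Rightarrow> ((nat \<Rightarrow> nat) \<Rightarrow> 'K::field_char_0) set \<Rightarrow> nat \<Rightarrow> ((nat \<Rightarrow> nat) \<Rightarrow> 'K) set" where
  "ideal_pow n I 0 = mps n"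
| "ideal_pow n I (Suc e) = ideal_prod n (ideal_pow n I e) I"

definition G_term :: "nat \<Rightarrow> ((nat \<Rightarrow> nat) \<Rightarrow> 'K::field_char_0) set \<Rightarrow> nat \<Rightarrow> (nat \<Rightarrow> nat) \<Rightarrow> ((nat \<Rightarrow> nat) \<Rightarrow> 'K) set" where
  "G_term n I a b = foldr (\<lambda>i J. ideal_prod n (ideal_pow n (deriv_ideal n i I) (b i)) J) [0..<a] (mps n)"

definition G_piece :: "nat \<Rightarrow> ((nat \<Rightarrow> nat) \<Rightarrow> 'K::field_char_0) set \<Rightarrow> nat \<Rightarrow> nat \<Rightarrow> ((nat \<Rightarrow> nat) \<Rightarrow> 'K) set" where
  "G_piece n I a j = gen_ideal n
     (\<Union>{G_term n I a b | b. (\<forall>i. i \<ge> a \<longrightarrow> b i = 0) \<and> (\<Sum>i<a. (a - i) * b i) \<ge> j})"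

definition coeff_ideal :: "nat \<Rightarrow> ((nat \<Rightarrow> nat) \<Rightarrow> 'K::field_char_0) set \<Rightarrow> nat \<Rightarrow> ((nat \<Rightarrow> nat) \<Rightarrow> 'K) set" where
  "coeff_ideal n I a = G_piece n I a (fact a)"

text \<open>The center (x_1^{c_1},...,x_k^{c_k}) is admissible for I iff its
  monomial valuation min{sum_{i<=k} m_i/c_i : f m ~= 0} is >= 1 for every f in I.\<close>
definition admissible :: "nat \<Rightarrow> (nat \<Rightarrow> rat) \<Rightarrow> ((nat \<Rightarrow> nat) \<Rightarrow> 'K::field_char_0) set \<Rightarrow> bool" where
  "admissible k c I \<longleftrightarrow> (\<forall>f\<in>I. \<forall>m. f m \<noteq> 0 \<longrightarrow> 1 \<le> (\<Sum>i=1..k. of_nat (m i) / c i))"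

end

theory Submission
  imports Defs "HOL-Library.Function_Algebras" "HOL-Library.Fun_Lexorder"
begin

text \<open>Give the monomial x^m the weight wt(m) = m_1/a_1 + ... + m_k/a_k; then J is admissible
  for an ideal iff every monomial occurring in its elements has weight at least 1.

  Since a_1 is the smallest a_i, a derivative lowers weights by at most 1/a_1. Hence if I has
  weight at least 1, then D^{<=i} I has weight at least 1 - i/a_1, and a generator of G_j of type
  (b_0, ..., b_{a_1-1}) has weight at least (sum of (a_1 - i) b_i) / a_1 >= j / a_1; for
  j = a_1! this is (a_1 - 1)!, i.e. J^{(a_1-1)!} is admissible for C(I, a_1).

  Conversely, f^N lies in C(I, a_1) for f in I and N = (a_1 - 1)!, because a_1 N = a_1!.
  Ordering monomials by weight and then lexicographically gives a monomial order, so the leading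
  monomial of f^N is N times that of f; weight at least N for f^N then forces weight at least 1
  for f.\<close>

section \<open>Power series\<close>

lemma gen_ideal_subset: "S \<subseteq> gen_ideal n S"
  unfolding gen_ideal_def by blast

lemma gen_ideal_least: "is_mps_ideal n X \<Longrightarrow> S \<subseteq> X \<Longrightarrow> gen_ideal n S \<subseteq> X"
  unfolding gen_ideal_def by blast

lemma finite_bounded_funs:
  assumes "finite A"
  shows "finite {v :: nat \<Rightarrow> nat. \<forall>i. v i \<le> B i \<and> (i \<notin> A \<longrightarrow> v i = 0)}"
proof (rule finite_subset)
  have "v i \<le> Max (B ` A)" if "v i \<le> B i" "i \<in> A" for v :: "nat \<Rightarrow> nat" and i
    using that assms by (meson Max_ge finite_imageI imageI order_trans)
  then show "{v. \<forall>i. v i \<le> B i \<and> (i \<notin> A \<longrightarrow> v i = 0)}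
      \<subseteq> {v. \<forall>i. (i \<in> A \<longrightarrow> v i \<in> {..Max (B ` A)}) \<and> (i \<notin> A \<longrightarrow> v i = 0)}"
    by auto
  show "finite {v. \<forall>i. (i \<in> A \<longrightarrow> v i \<in> {..Max (B ` A)}) \<and> (i \<notin> A \<longrightarrow> v i = 0)}"
    using assms by (intro finite_set_of_finite_funs) auto
qed

lemma fun_add_diff_inverse: "u \<le> m \<Longrightarrow> u + (m - u) = (m :: nat \<Rightarrow> nat)"
  by (simp add: le_fun_def fun_eq_iff)

lemma finite_atMost_mono_exps:
  assumes "m \<in> mono_exps n"
  shows "finite {..m}"
proof (rule finite_subset[OF _ finite_bounded_funs[of "{1..n}" m]])
  show "{..m} \<subseteq> {v. \<forall>i. v i \<le> m i \<and> (i \<notin> {1..n} \<longrightarrow> v i = 0)}"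
  proof (intro subsetI CollectI allI conjI impI)
    fix v i assume "v \<in> {..m}"
    then show "v i \<le> m i"
      by (simp add: le_fun_def)
    moreover assume "i \<notin> {1..n}"
    ultimately show "v i = 0"
      using assms by (simp add: mono_exps_def)
  qed
qed simp

text \<open>Exponent vectors are compared, added and subtracted pointwise
  (\<^const>\<open>less_eq\<close> on functions, HOL-Library.Function_Algebras).\<close>

lemma mps_mult_apply: "mps_mult f g m = (\<Sum>u\<in>{..m}. f u * g (m - u))"
  by (simp add: mps_mult_def atMost_def le_fun_def fun_diff_def)

lemma mps_mult_neq_zeroE:
  assumes "mps_mult f g m \<noteq> 0"
  obtains u where "u \<le> m" "f u \<noteq> 0" "g (m - u) \<noteq> 0"
proof -
  from assms obtain u where "u \<in> {..m}" "f u * g (m - u) \<noteq> 0"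
    unfolding mps_mult_apply by (rule sum.not_neutral_contains_not_neutral)
  then show ?thesis
    using that by simp
qed

lemma mps_mult_closed:
  assumes "f \<in> mps n" "g \<in> mps n"
  shows "mps_mult f g \<in> mps n"
  unfolding mps_def
proof (intro CollectI allI impI)
  fix m assume "mps_mult f g m \<noteq> 0"
  then obtain u where "u \<le> m" "f u \<noteq> 0" "g (m - u) \<noteq> 0"
    by (rule mps_mult_neq_zeroE)
  then have "u \<in> mono_exps n" "m - u \<in> mono_exps n"
    using assms by (auto simp: mps_def)
  then show "m \<in> mono_exps n"
    by (auto simp: mono_exps_def)
qed

lemma mps_deriv_closed:
  assumes "i \<in> {1..n}" "f \<in> mps n"
  shows "mps_deriv i f \<in> mps n"
proof -
  have "m(i := m i + 1) \<in> mono_exps n \<Longrightarrow> m \<in> mono_exps n" for m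
    using assms(1) unfolding mono_exps_def by (auto split: if_splits)
  then show ?thesis
    using assms(2) unfolding mps_def mps_deriv_def by auto
qed

definition mps_one :: "(nat \<Rightarrow> nat) \<Rightarrow> 'K::field_char_0" where
  "mps_one m = (if m = 0 then 1 else 0)"

primrec mps_pow :: "((nat \<Rightarrow> nat) \<Rightarrow> 'K::field_char_0) \<Rightarrow> nat \<Rightarrow> (nat \<Rightarrow> nat) \<Rightarrow> 'K" where
  "mps_pow f 0 = mps_one"
| "mps_pow f (Suc e) = mps_mult (mps_pow f e) f"

lemma mps_one_closed: "mps_one \<in> mps n"
  by (simp add: mps_def mps_one_def mono_exps_def)

lemma mps_pow_closed: "f \<in> mps n \<Longrightarrow> mps_pow f e \<in> mps n"
  by (induction e) (simp_all add: mps_one_closed mps_mult_closed)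

lemma mps_mult_one_right:
  assumes "f \<in> mps n"
  shows "mps_mult f mps_one = f"
proof
  fix m
  show "mps_mult f mps_one m = f m"
  proof (cases "m \<in> mono_exps n")
    case True
    have summand: "f u * mps_one (m - u) = (if u = m then f m else 0)" if "u \<le> m" for u
    proof -
      have "m - u = 0 \<longleftrightarrow> m \<le> u"
        by (simp add: le_fun_def fun_eq_iff)
      then show ?thesis
        using that by (auto simp: mps_one_def)
    qed
    have "mps_mult f mps_one m = (\<Sum>u\<in>{..m}. if u = m then f m else 0)"
      unfolding mps_mult_apply by (rule sum.cong) (simp_all add: summand)
    then show ?thesis
      by (simp add: finite_atMost_mono_exps[OF True])
  next
    case False
    then have "f m = 0" "mps_mult f mps_one m = 0"
      using assms mps_mult_closed[OF assms mps_one_closed] by (auto simp: mps_def)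
    then show ?thesis
      by simp
  qed
qed

lemma mps_pow_mem_ideal_pow: "f \<in> X \<Longrightarrow> mps_pow f e \<in> ideal_pow n X e"
proof (induction e)
  case 0
  then show ?case by (simp add: mps_one_closed)
next
  case (Suc e)
  then show ?case
    unfolding ideal_pow.simps mps_pow.simps ideal_prod_def
    by (intro subsetD[OF gen_ideal_subset]) blast
qed

lemma subset_deriv_ideal: "I \<subseteq> deriv_ideal n j I"
  unfolding deriv_ideal_def
  by (rule subset_trans[OF _ gen_ideal_subset]) (force intro: exI[of _ "[]"])

section \<open>Weights of monomials\<close>

definition mono_weight :: "nat \<Rightarrow> (nat \<Rightarrow> rat) \<Rightarrow> (nat \<Rightarrow> nat) \<Rightarrow> rat" where
  "mono_weight k a m = (\<Sum>i=1..k. of_nat (m i) / a i)"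

lemma mono_weight_add: "mono_weight k a (u + v) = mono_weight k a u + mono_weight k a v"
  by (simp add: mono_weight_def sum.distrib add_divide_distrib)

lemma mono_weight_nonneg: "\<forall>i\<in>{1..k}. 0 < a i \<Longrightarrow> 0 \<le> mono_weight k a m"
  unfolding mono_weight_def by (intro sum_nonneg divide_nonneg_nonneg) (auto simp: less_imp_le)

lemma mono_weight_mult: "mono_weight k a (\<lambda>i. e * m i) = of_nat e * mono_weight k a m"
  by (simp add: mono_weight_def sum_distrib_left)

lemma mono_weight_upd_Suc_le:
  assumes "0 < a 1" "\<forall>j\<in>{1..k}. a 1 \<le> a j"
  shows "mono_weight k a (m(i := m i + 1)) \<le> mono_weight k a m + 1 / a 1"
proof -
  have "m(i := m i + 1) = m + (\<lambda>j. if j = i then 1 else 0)"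
    by (simp add: fun_eq_iff)
  moreover have "mono_weight k a (\<lambda>j. if j = i then 1 else 0) = (\<Sum>j=1..k. if j = i then 1 / a i else 0)"
    unfolding mono_weight_def by (rule sum.cong) auto
  moreover have "(\<Sum>j=1..k. if j = i then 1 / a i else 0) \<le> 1 / a 1"
  proof (cases "i \<in> {1..k}")
    case True
    then show ?thesis
      using assms by (simp add: frac_le)
  next
    case False
    then show ?thesis
      using assms(1) by auto
  qed
  ultimately show ?thesis
    by (simp add: mono_weight_add)
qed

lemma admissible_iff_weight: "admissible k a X \<longleftrightarrow> (\<forall>f\<in>X. \<forall>m. f m \<noteq> 0 \<longrightarrow> 1 \<le> mono_weight k a m)"
  by (simp add: admissible_def mono_weight_def)

lemma admissible_scaled_iff_weight:
  assumes "0 < c"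
  shows "admissible k (\<lambda>i. a i * c) X \<longleftrightarrow> (\<forall>f\<in>X. \<forall>m. f m \<noteq> 0 \<longrightarrow> c \<le> mono_weight k a m)"
proof -
  have "mono_weight k (\<lambda>i. a i * c) m = mono_weight k a m / c" for m
    by (simp add: mono_weight_def sum_divide_distrib divide_divide_eq_left)
  then show ?thesis
    using assms by (simp add: admissible_iff_weight le_divide_eq_1_pos)
qed

definition mps_weight_ge :: "nat \<Rightarrow> nat \<Rightarrow> (nat \<Rightarrow> rat) \<Rightarrow> rat \<Rightarrow> ((nat \<Rightarrow> nat) \<Rightarrow> 'K::field_char_0) set" where
  "mps_weight_ge n k a c = {f \<in> mps n. \<forall>m. f m \<noteq> 0 \<longrightarrow> c \<le> mono_weight k a m}"

lemma mps_weight_ge_antimono: "c' \<le> c \<Longrightarrow> mps_weight_ge n k a c \<subseteq> mps_weight_ge n k a c'"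
  unfolding mps_weight_ge_def by auto

lemma mps_subset_weight_ge_0: "\<forall>i\<in>{1..k}. 0 < a i \<Longrightarrow> mps n \<subseteq> mps_weight_ge n k a 0"
  unfolding mps_weight_ge_def using mono_weight_nonneg by auto

lemma mps_mult_weight_ge:
  assumes "f \<in> mps_weight_ge n k a c" "g \<in> mps_weight_ge n k a d"
  shows "mps_mult f g \<in> mps_weight_ge n k a (c + d)"
proof -
  have "c + d \<le> mono_weight k a m" if nz: "mps_mult f g m \<noteq> 0" for m
  proof -
    obtain u where "u \<le> m" "f u \<noteq> 0" "g (m - u) \<noteq> 0"
      using nz by (rule mps_mult_neq_zeroE)
    then have "c \<le> mono_weight k a u" "d \<le> mono_weight k a (m - u)" "m = u + (m - u)"
      using assms by (auto simp: mps_weight_ge_def fun_add_diff_inverse)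
    then show ?thesis
      by (metis add_mono mono_weight_add)
  qed
  then show ?thesis
    using assms mps_mult_closed by (auto simp: mps_weight_ge_def)
qed

lemma is_mps_ideal_weight_ge:
  assumes "\<forall>i\<in>{1..k}. 0 < a i"
  shows "is_mps_ideal n (mps_weight_ge n k a c :: ((nat \<Rightarrow> nat) \<Rightarrow> 'K::field_char_0) set)"
  unfolding is_mps_ideal_def
proof (intro conjI ballI)
  show "mps_weight_ge n k a c \<subseteq> mps n" "(\<lambda>_. 0 :: 'K) \<in> mps_weight_ge n k a c"
    by (auto simp: mps_weight_ge_def mps_def)
next
  fix f g :: "(nat \<Rightarrow> nat) \<Rightarrow> 'K"
  assume "f \<in> mps_weight_ge n k a c" "g \<in> mps_weight_ge n k a c"
  moreover have "mps_add f g m \<noteq> 0 \<Longrightarrow> f m \<noteq> 0 \<or> g m \<noteq> 0" for m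
    by (auto simp: mps_add_def)
  ultimately show "mps_add f g \<in> mps_weight_ge n k a c"
    unfolding mps_weight_ge_def mps_def by blast
next
  fix f g :: "(nat \<Rightarrow> nat) \<Rightarrow> 'K"
  assume "f \<in> mps_weight_ge n k a c" "g \<in> mps n"
  then show "mps_mult g f \<in> mps_weight_ge n k a c"
    using mps_mult_weight_ge[of g n k a 0 f c] mps_subset_weight_ge_0[OF assms] by auto
qed

lemma ideal_prod_weight_ge:
  assumes "\<forall>i\<in>{1..k}. 0 < a i" "X \<subseteq> mps_weight_ge n k a c" "Y \<subseteq> mps_weight_ge n k a d"
  shows "ideal_prod n X Y \<subseteq> mps_weight_ge n k a (c + d)"
  unfolding ideal_prod_def
  by (rule gen_ideal_least[OF is_mps_ideal_weight_ge[OF assms(1)]]) (use assms mps_mult_weight_ge in blast)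

lemma ideal_pow_weight_ge:
  assumes "\<forall>i\<in>{1..k}. 0 < a i" "X \<subseteq> mps_weight_ge n k a c"
  shows "ideal_pow n X e \<subseteq> mps_weight_ge n k a (of_nat e * c)"
proof (induction e)
  case 0
  then show ?case
    using mps_subset_weight_ge_0[OF assms(1)] by simp
next
  case (Suc e)
  then show ?case
    using ideal_prod_weight_ge[OF assms(1) Suc assms(2)] by (simp add: algebra_simps)
qed

section \<open>Weight bounds for derivative ideals and the coefficient ideal\<close>

lemma mps_deriv_weight_ge:
  assumes "0 < a 1" "\<forall>j\<in>{1..k}. a 1 \<le> a j" and "i \<in> {1..n}" "f \<in> mps_weight_ge n k a c"
  shows "mps_deriv i f \<in> mps_weight_ge n k a (c - 1 / a 1)"
proof -
  have "c - 1 / a 1 \<le> mono_weight k a m" if "mps_deriv i f m \<noteq> 0" for m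
  proof -
    have "c \<le> mono_weight k a (m(i := m i + 1))"
      using that assms(4) by (auto simp: mps_deriv_def mps_weight_ge_def)
    then show ?thesis
      using mono_weight_upd_Suc_le[OF assms(1,2), of m i] by linarith
  qed
  then show ?thesis
    using mps_deriv_closed[OF assms(3)] assms(4) by (auto simp: mps_weight_ge_def)
qed

lemma foldr_mps_deriv_weight_ge:
  assumes "0 < a 1" "\<forall>j\<in>{1..k}. a 1 \<le> a j" and "set ds \<subseteq> {1..n}" "f \<in> mps_weight_ge n k a c"
  shows "foldr mps_deriv ds f \<in> mps_weight_ge n k a (c - of_nat (length ds) / a 1)"
  using assms(3)
proof (induction ds)
  case Nil
  then show ?case
    using assms(4) by simp
next
  case (Cons d ds)
  then have "mps_deriv d (foldr mps_deriv ds f)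
      \<in> mps_weight_ge n k a (c - of_nat (length ds) / a 1 - 1 / a 1)"
    by (intro mps_deriv_weight_ge[OF assms(1,2)]) auto
  moreover have "c - of_nat (length ds) / a 1 - 1 / a 1 = c - of_nat (length (d # ds)) / a 1"
    by (simp add: add_divide_distrib)
  ultimately show ?case
    by (simp only: foldr_Cons o_apply)
qed

lemma deriv_ideal_weight_ge:
  assumes "0 < a 1" "\<forall>j\<in>{1..k}. a 1 \<le> a j" and "I \<subseteq> mps_weight_ge n k a c"
  shows "deriv_ideal n j I \<subseteq> mps_weight_ge n k a (c - of_nat j / a 1)"
  unfolding deriv_ideal_def
proof (rule gen_ideal_least, safe)
  have "\<forall>i\<in>{1..k}. 0 < a i"
    using assms(1,2) by (metis order_less_le_trans)
  then show "is_mps_ideal n (mps_weight_ge n k a (c - of_nat j / a 1))"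
    by (rule is_mps_ideal_weight_ge)
  fix ds f assume "length ds \<le> j" "set ds \<subseteq> {1..n}" "f \<in> I"
  then have "foldr mps_deriv ds f \<in> mps_weight_ge n k a (c - of_nat (length ds) / a 1)"
    using foldr_mps_deriv_weight_ge[OF assms(1,2)] assms(3) by blast
  moreover have "c - of_nat j / a 1 \<le> c - of_nat (length ds) / a 1"
    using \<open>length ds \<le> j\<close> assms(1) by (intro diff_left_mono divide_right_mono) auto
  ultimately show "foldr mps_deriv ds f \<in> mps_weight_ge n k a (c - of_nat j / a 1)"
    using mps_weight_ge_antimono by blast
qed

lemma foldr_ideal_prod_weight_ge:
  assumes "\<forall>i\<in>{1..k}. 0 < a i" "\<forall>i\<in>set xs. X i \<subseteq> mps_weight_ge n k a (c i)"
  shows "foldr (\<lambda>i J. ideal_prod n (X i) J) xs (mps n) \<subseteq> mps_weight_ge n k a (\<Sum>i\<leftarrow>xs. c i)"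
  using assms(2)
proof (induction xs)
  case Nil
  then show ?case
    using mps_subset_weight_ge_0[OF assms(1)] by simp
next
  case (Cons x xs)
  have "ideal_prod n (X x) (foldr (\<lambda>i J. ideal_prod n (X i) J) xs (mps n))
      \<subseteq> mps_weight_ge n k a (c x + (\<Sum>i\<leftarrow>xs. c i))"
    by (rule ideal_prod_weight_ge[OF assms(1)]) (use Cons in auto)
  then show ?case
    by simp
qed

lemma G_term_weight_ge:
  assumes "0 < a 1" "\<forall>j\<in>{1..k}. a 1 \<le> a j" "I \<subseteq> mps_weight_ge n k a 1"
  shows "G_term n I d b \<subseteq> mps_weight_ge n k a (\<Sum>i<d. of_nat (b i) * (1 - of_nat i / a 1))"
proof -
  have "\<forall>i\<in>{1..k}. 0 < a i"
    using assms(1,2) by (metis order_less_le_trans)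
  moreover have "ideal_pow n (deriv_ideal n i I) (b i)
      \<subseteq> mps_weight_ge n k a (of_nat (b i) * (1 - of_nat i / a 1))" for i
    by (intro ideal_pow_weight_ge deriv_ideal_weight_ge calculation assms)
  ultimately show ?thesis
    using foldr_ideal_prod_weight_ge[where X = "\<lambda>i. ideal_pow n (deriv_ideal n i I) (b i)"
        and xs = "[0..<d]" and c = "\<lambda>i. of_nat (b i) * (1 - of_nat i / a 1)"]
    by (simp add: G_term_def interv_sum_list_conv_sum_set_nat atLeast0LessThan)
qed

lemma G_piece_weight_ge:
  assumes "a 1 = of_nat d" "0 < d" "\<forall>j\<in>{1..k}. a 1 \<le> a j" "I \<subseteq> mps_weight_ge n k a 1"
  shows "G_piece n I d j \<subseteq> mps_weight_ge n k a (of_nat j / of_nat d)"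
  unfolding G_piece_def
proof (rule gen_ideal_least, safe)
  have a1: "0 < a 1"
    using assms(1,2) by simp
  then show "is_mps_ideal n (mps_weight_ge n k a (of_nat j / of_nat d))"
    using assms(3) by (intro is_mps_ideal_weight_ge) (metis order_less_le_trans)
  fix b f assume j: "j \<le> (\<Sum>i<d. (d - i) * b i)" and f: "f \<in> G_term n I d b"
  have "of_nat j / of_nat d \<le> (of_nat (\<Sum>i<d. (d - i) * b i) / of_nat d :: rat)"
    using j by (intro divide_right_mono of_nat_mono) simp_all
  also have "\<dots> = (\<Sum>i<d. of_nat ((d - i) * b i) / of_nat d)"
    by (simp only: sum_divide_distrib of_nat_sum)
  also have "\<dots> = (\<Sum>i<d. of_nat (b i) * (1 - of_nat i / a 1))"
    using assms(1,2) by (intro sum.cong) (auto simp: of_nat_diff field_simps)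
  finally show "f \<in> mps_weight_ge n k a (of_nat j / of_nat d)"
    using f G_term_weight_ge[OF a1 assms(3,4)] mps_weight_ge_antimono by blast
qed

lemma coeff_ideal_weight_ge:
  assumes "a 1 = of_nat d" "0 < d" "\<forall>j\<in>{1..k}. a 1 \<le> a j" "I \<subseteq> mps_weight_ge n k a 1"
  shows "coeff_ideal n I d \<subseteq> mps_weight_ge n k a (of_nat (fact (d - 1)))"
proof -
  have "(of_nat (fact d) / of_nat d :: rat) = of_nat (fact (d - 1))"
    using assms(2) by (simp add: fact_reduce[of d])
  then show ?thesis
    using G_piece_weight_ge[OF assms, of "fact d"] by (simp add: coeff_ideal_def)
qed

lemma mps_one_mem_foldr_ideal_prod:
  assumes "\<forall>i\<in>set xs. mps_one \<in> X i"
  shows "mps_one \<in> foldr (\<lambda>i J. ideal_prod n (X i) J) xs (mps n)"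
  using assms
proof (induction xs)
  case Nil
  then show ?case
    by (simp add: mps_one_closed)
next
  case (Cons x xs)
  then have "mps_mult mps_one mps_one \<in> ideal_prod n (X x) (foldr (\<lambda>i J. ideal_prod n (X i) J) xs (mps n))"
    unfolding ideal_prod_def by (intro subsetD[OF gen_ideal_subset]) auto
  then show ?case
    by (simp add: mps_mult_one_right[OF mps_one_closed])
qed

lemma mps_pow_mem_G_piece:
  assumes "f \<in> I" "I \<subseteq> mps n" "0 < d" "j \<le> d * e"
  shows "mps_pow f e \<in> G_piece n I d j"
proof -
  define b where "b = (\<lambda>i::nat. if i = 0 then e else 0)"
  have "mps_pow f e \<in> ideal_pow n (deriv_ideal n 0 I) (b 0)"
    unfolding b_def using mps_pow_mem_ideal_pow[OF subsetD[OF subset_deriv_ideal assms(1)]] by simp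
  moreover have "mps_one \<in> foldr (\<lambda>i J. ideal_prod n (ideal_pow n (deriv_ideal n i I) (b i)) J) [1..<d] (mps n)"
    by (rule mps_one_mem_foldr_ideal_prod) (simp add: b_def mps_one_closed)
  moreover have upt: "[0..<d] = 0 # [1..<d]"
    using assms(3) by (simp add: upt_conv_Cons)
  ultimately have "mps_mult (mps_pow f e) mps_one \<in> G_term n I d b"
    unfolding G_term_def upt foldr_Cons o_apply ideal_prod_def
    by (intro subsetD[OF gen_ideal_subset]) blast
  then have "mps_pow f e \<in> G_term n I d b"
    using assms(1,2) mps_pow_closed mps_mult_one_right by (metis subsetD)
  moreover have "(\<Sum>i<d. (d - i) * b i) = d * e"
    using assms(3) by (simp add: b_def if_distrib[of "\<lambda>x. _ * x"] cong: if_cong)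
  moreover have "\<forall>i. d \<le> i \<longrightarrow> b i = 0"
    using assms(3) by (simp add: b_def)
  ultimately show ?thesis
    unfolding G_piece_def using assms(4)
    by (intro subsetD[OF gen_ideal_subset] UnionI[of "G_term n I d b"]) auto
qed

lemma mps_pow_fact_mem_coeff_ideal:
  assumes "f \<in> I" "I \<subseteq> mps n" "0 < d"
  shows "mps_pow f (fact (d - 1)) \<in> coeff_ideal n I d"
  unfolding coeff_ideal_def
  using assms by (intro mps_pow_mem_G_piece) (simp_all add: fact_reduce[of d])

section \<open>Leading monomials\<close>

lemma less_fun_add:
  assumes "less_fun u u'" "v = v' \<or> less_fun v v'"
  shows "less_fun (u + v) (u' + v' :: nat \<Rightarrow> nat)"
proof -
  obtain j where j: "u j < u' j" "\<forall>i<j. u i = u' i"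
    using assms(1) by (auto elim: less_funE)
  show ?thesis
    using assms(2)
  proof
    assume "v = v'"
    then show ?thesis
      using j unfolding less_fun_def by auto
  next
    assume "less_fun v v'"
    then obtain j' where j': "v j' < v' j'" "\<forall>i<j'. v i = v' i"
      by (auto elim: less_funE)
    have "(u + v) (min j j') < (u' + v') (min j j')"
      using j j' by (cases j j' rule: linorder_cases) (auto simp: min_def)
    moreover have "\<forall>i<min j j'. (u + v) i = (u' + v') i"
      using j j' by simp
    ultimately show ?thesis
      unfolding less_fun_def by blast
  qed
qed

text \<open>Ties in weight are broken lexicographically, so that a product of two series has a
  unique monomial of least order.\<close>

definition mono_less :: "nat \<Rightarrow> (nat \<Rightarrow> rat) \<Rightarrow> (nat \<Rightarrow> nat) \<Rightarrow> (nat \<Rightarrow> nat) \<Rightarrow> bool" where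
  "mono_less k a u v \<longleftrightarrow> mono_weight k a u < mono_weight k a v
     \<or> (mono_weight k a u = mono_weight k a v \<and> less_fun u v)"

definition mono_le :: "nat \<Rightarrow> (nat \<Rightarrow> rat) \<Rightarrow> (nat \<Rightarrow> nat) \<Rightarrow> (nat \<Rightarrow> nat) \<Rightarrow> bool" where
  "mono_le k a u v \<longleftrightarrow> u = v \<or> mono_less k a u v"

lemma mono_less_irrefl: "\<not> mono_less k a u u"
  by (simp add: mono_less_def less_fun_irrefl)

lemma mono_le_imp_weight_le: "mono_le k a u v \<Longrightarrow> mono_weight k a u \<le> mono_weight k a v"
  by (auto simp: mono_le_def mono_less_def)

lemma mono_less_add:
  assumes "mono_less k a u u'" "mono_le k a v v'"
  shows "mono_less k a (u + v) (u' + v')"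
  using assms less_fun_add[of u u' v v']
  by (auto simp: mono_less_def mono_le_def mono_weight_add)

lemma mono_le_add:
  assumes "mono_le k a u u'" "mono_le k a v v'"
  shows "mono_le k a (u + v) (u' + v')"
proof (cases "u = u'")
  case True
  then show ?thesis
    using assms(2) mono_less_add[of k a v v' u u] by (auto simp: mono_le_def add.commute)
next
  case False
  then show ?thesis
    using assms mono_less_add by (auto simp: mono_le_def)
qed

definition lead_mono :: "nat \<Rightarrow> (nat \<Rightarrow> rat) \<Rightarrow> ((nat \<Rightarrow> nat) \<Rightarrow> 'K::zero) \<Rightarrow> (nat \<Rightarrow> nat) \<Rightarrow> bool" where
  "lead_mono k a f u \<longleftrightarrow> f u \<noteq> 0 \<and> (\<forall>m. f m \<noteq> 0 \<longrightarrow> mono_le k a u m)"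

lemma lead_mono_mult:
  assumes "f \<in> mps n" "g \<in> mps n" "lead_mono k a f u" "lead_mono k a g v"
  shows "lead_mono k a (mps_mult f g) (u + v)"
proof -
  have "u + v \<in> mono_exps n"
    using assms by (auto simp: lead_mono_def mps_def mono_exps_def)
  \<comment> \<open>u + v splits in only one way into a monomial of f and a monomial of g\<close>
  have summand: "f w * g (u + v - w) = (if w = u then f u * g v else 0)" if "w \<le> u + v" for w
  proof (cases "w = u")
    case True
    then show ?thesis
      by simp
  next
    case False
    have "\<not> mono_less k a (u + v) (w + (u + v - w))"
      by (simp add: fun_add_diff_inverse[OF that] mono_less_irrefl)
    then have "\<not> (mono_less k a u w \<and> mono_le k a v (u + v - w))"
      using mono_less_add by blast
    then show ?thesis
      using assms(3,4) False by (auto simp: lead_mono_def mono_le_def)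
  qed
  have "mps_mult f g (u + v) = (\<Sum>w\<in>{..u + v}. if w = u then f u * g v else 0)"
    unfolding mps_mult_apply by (rule sum.cong) (simp_all add: summand)
  then have "mps_mult f g (u + v) = f u * g v"
    by (simp add: finite_atMost_mono_exps[OF \<open>u + v \<in> mono_exps n\<close>] le_fun_def)
  moreover have "mono_le k a (u + v) m" if "mps_mult f g m \<noteq> 0" for m
  proof -
    obtain w where w: "w \<le> m" "f w \<noteq> 0" "g (m - w) \<noteq> 0"
      using \<open>mps_mult f g m \<noteq> 0\<close> by (rule mps_mult_neq_zeroE)
    then have "mono_le k a (u + v) (w + (m - w))"
      using assms(3,4) by (intro mono_le_add) (auto simp: lead_mono_def)
    then show ?thesis
      by (simp add: fun_add_diff_inverse[OF w(1)])
  qed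
  ultimately show ?thesis
    using assms(3,4) by (simp add: lead_mono_def)
qed

lemma lead_mono_one: "lead_mono k a mps_one 0"
  by (simp add: lead_mono_def mps_one_def mono_le_def)

lemma lead_mono_pow:
  assumes "f \<in> mps n" "lead_mono k a f u"
  shows "lead_mono k a (mps_pow f e) (\<lambda>i. e * u i)"
proof (induction e)
  case 0
  then show ?case
    using lead_mono_one by (simp add: zero_fun_def)
next
  case (Suc e)
  have "(\<lambda>i. e * u i) + u = (\<lambda>i. Suc e * u i)"
    by (simp add: fun_eq_iff)
  then show ?case
    using lead_mono_mult[OF mps_pow_closed[OF assms(1)] assms(1) Suc assms(2)] by simp
qed

text \<open>Only the exponents of x_1, ..., x_k enter the weight, and they are bounded by a_i c.\<close>

lemma finite_mono_weight_le:
  assumes "\<forall>i\<in>{1..k}. 0 < a i"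
  shows "finite (mono_weight k a ` {m. mono_weight k a m \<le> c})"
proof -
  define R where "R m = (\<lambda>i. if i \<in> {1..k} then m i else 0)" for m :: "nat \<Rightarrow> nat"
  have weight_R: "mono_weight k a (R m) = mono_weight k a m" for m
    unfolding mono_weight_def R_def by (rule sum.cong) auto
  have "R m i \<le> nat \<lceil>a i * c\<rceil>" if "mono_weight k a m \<le> c" for m i
  proof (cases "i \<in> {1..k}")
    case True
    have "of_nat (m i) / a i \<le> mono_weight k a m"
      unfolding mono_weight_def using True assms
      by (intro member_le_sum) (auto intro!: divide_nonneg_nonneg simp: less_imp_le)
    then have "of_nat (m i) / a i \<le> c"
      using that by linarith
    then have "of_nat (m i) \<le> a i * c"
      using True assms by (simp add: pos_divide_le_eq mult.commute)
    then show ?thesis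
      using True by (simp add: R_def le_nat_iff ceiling_le_iff[symmetric] le_ceiling_iff)
  next
    case False
    then show ?thesis
      unfolding R_def by (subst if_not_P) simp_all
  qed
  then have "R ` {m. mono_weight k a m \<le> c}
      \<subseteq> {v. \<forall>i. v i \<le> nat \<lceil>a i * c\<rceil> \<and> (i \<notin> {1..k} \<longrightarrow> v i = 0)}"
    by (auto simp: R_def)
  then have "finite (mono_weight k a ` R ` {m. mono_weight k a m \<le> c})"
    by (intro finite_imageI finite_subset[OF _ finite_bounded_funs[of "{1..k}"]]) simp_all
  then show ?thesis
    by (simp add: image_image weight_R)
qed

lemma ex_min_mono_weight:
  assumes "\<forall>i\<in>{1..k}. 0 < a i" "f m1 \<noteq> 0"
  obtains m where "f m \<noteq> 0" "\<forall>m'. f m' \<noteq> 0 \<longrightarrow> mono_weight k a m \<le> mono_weight k a m'"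
proof -
  define M where "M = {m. f m \<noteq> 0 \<and> mono_weight k a m \<le> mono_weight k a m1}"
  have "mono_weight k a ` M \<subseteq> mono_weight k a ` {m. mono_weight k a m \<le> mono_weight k a m1}"
    unfolding M_def by (rule image_mono) blast
  then have fin: "finite (mono_weight k a ` M)"
    using finite_mono_weight_le[OF assms(1)] by (rule finite_subset)
  have "m1 \<in> M"
    using assms(2) by (simp add: M_def)
  then have "Min (mono_weight k a ` M) \<in> mono_weight k a ` M"
    using fin by (intro Min_in) auto
  then obtain m where min: "Min (mono_weight k a ` M) = mono_weight k a m" and "m \<in> M"
    by (rule imageE)
  have "mono_weight k a m \<le> mono_weight k a m'" if "f m' \<noteq> 0" for m'
  proof (cases "mono_weight k a m' \<le> mono_weight k a m1")
    case True
    then have "m' \<in> M"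
      using that by (simp add: M_def)
    then show ?thesis
      unfolding min[symmetric] using fin by (intro Min_le) auto
  next
    case False
    then show ?thesis
      using \<open>m \<in> M\<close> by (simp add: M_def)
  qed
  then show thesis
    using \<open>m \<in> M\<close> by (intro that[of m]) (auto simp: M_def)
qed

lemma less_fun_prefix_cong:
  assumes "less_fun u v" "\<not> (\<forall>i<j. u i = v i)" "\<forall>i<j. u' i = u i"
  shows "less_fun u' (v :: nat \<Rightarrow> nat)"
proof -
  obtain j' where j': "u j' < v j'" "\<forall>i<j'. u i = v i"
    using assms(1) unfolding less_fun_def by blast
  have "j' < j"
  proof (rule ccontr)
    assume "\<not> j' < j"
    then show False
      using assms(2) j'(2) by auto
  qed
  then have "u' j' < v j'" "\<forall>i<j'. u' i = v i"
    using j' assms(3) by auto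
  then show ?thesis
    unfolding less_fun_def by blast
qed

lemma ex_less_fun_least_on_prefix:
  assumes "u \<in> S"
  shows "\<exists>u0\<in>S. \<forall>v\<in>S. (\<forall>i<j. u0 i = v i) \<or> less_fun u0 (v :: nat \<Rightarrow> nat)"
proof (induction j)
  case 0
  then show ?case
    using assms by auto
next
  case (Suc j)
  then obtain u0 where u0: "u0 \<in> S" "\<forall>v\<in>S. (\<forall>i<j. u0 i = v i) \<or> less_fun u0 v"
    by blast
  define T where "T = {v \<in> S. \<forall>i<j. u0 i = v i}"
  have "u0 \<in> T"
    using u0(1) by (simp add: T_def)
  then obtain u1 where u1: "u1 \<in> T" "\<forall>v\<in>T. u1 j \<le> v j"
    using ex_has_least_nat[of "\<lambda>v. v \<in> T" u0 "\<lambda>v. v j"] by blast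
  have "(\<forall>i<Suc j. u1 i = v i) \<or> less_fun u1 v" if "v \<in> S" for v
  proof (cases "v \<in> T")
    case True
    then have agree: "\<forall>i<j. u1 i = v i" and "u1 j \<le> v j"
      using u1 by (auto simp: T_def)
    then consider "u1 j = v j" | "u1 j < v j"
      by linarith
    then show ?thesis
    proof cases
      case 1
      then show ?thesis
        using agree less_Suc_eq by auto
    next
      case 2
      then show ?thesis
        using agree unfolding less_fun_def by blast
    qed
  next
    case False
    then have "\<not> (\<forall>i<j. u0 i = v i)"
      using that by (simp add: T_def)
    moreover from this have "less_fun u0 v"
      using u0(2) that by blast
    moreover have "\<forall>i<j. u1 i = u0 i"
      using u1(1) by (simp add: T_def)
    ultimately show ?thesis
      using less_fun_prefix_cong by blast
  qed
  moreover have "u1 \<in> S"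
    using u1(1) by (simp add: T_def)
  ultimately show ?case
    by blast
qed

text \<open>\<^const>\<open>less_fun\<close> is not well-founded on \<^typ>\<open>nat \<Rightarrow> nat\<close>; the common
  bound N on the supports is what makes a least element exist.\<close>

lemma ex_less_fun_least:
  assumes "u \<in> S" "\<forall>v\<in>S. \<forall>i\<ge>N. v i = 0"
  obtains u0 where "u0 \<in> S" "\<forall>v\<in>S. u0 = v \<or> less_fun u0 (v :: nat \<Rightarrow> nat)"
proof -
  obtain u0 where u0: "u0 \<in> S" "\<forall>v\<in>S. (\<forall>i<N. u0 i = v i) \<or> less_fun u0 v"
    using ex_less_fun_least_on_prefix[OF assms(1)] by blast
  have "u0 = v \<or> less_fun u0 v" if "v \<in> S" for v
  proof (cases "\<forall>i<N. u0 i = v i")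
    case True
    have "u0 i = v i" for i
    proof (cases "i < N")
      case False
      then have "N \<le> i"
        by simp
      then show ?thesis
        using u0(1) that assms(2) by metis
    qed (use True in simp)
    then show ?thesis
      by (simp add: fun_eq_iff)
  next
    case False
    then show ?thesis
      using u0(2) that by blast
  qed
  then show thesis
    using that u0(1) by blast
qed

lemma ex_lead_mono:
  assumes "\<forall>i\<in>{1..k}. 0 < a i" "f \<in> mps n" "f m1 \<noteq> 0"
  obtains u where "lead_mono k a f u"
proof -
  obtain m where m: "f m \<noteq> 0" "\<forall>m'. f m' \<noteq> 0 \<longrightarrow> mono_weight k a m \<le> mono_weight k a m'"
    using assms(1,3) by (rule ex_min_mono_weight)
  define S where "S = {m'. f m' \<noteq> 0 \<and> mono_weight k a m' = mono_weight k a m}"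
  have "m \<in> S"
    using m(1) by (simp add: S_def)
  moreover have "\<forall>v\<in>S. \<forall>i\<ge>Suc n. v i = 0"
    using assms(2) by (auto simp: S_def mps_def mono_exps_def)
  ultimately obtain u where u: "u \<in> S" "\<forall>v\<in>S. u = v \<or> less_fun u v"
    by (rule ex_less_fun_least)
  have "mono_le k a u m'" if "f m' \<noteq> 0" for m'
  proof (cases "mono_weight k a m' = mono_weight k a m")
    case True
    then show ?thesis
      using u that by (auto simp: S_def mono_le_def mono_less_def)
  next
    case False
    then show ?thesis
      using u(1) m(2) that by (auto simp: S_def mono_le_def mono_less_def order_less_le)
  qed
  then have "lead_mono k a f u"
    using u(1) by (simp add: lead_mono_def S_def)
  then show thesis
    by (rule that)
qed

lemma mps_weight_ge_of_pow:
  assumes "\<forall>i\<in>{1..k}. 0 < a i" "f \<in> mps n" "0 < e"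
    and "mps_pow f e \<in> mps_weight_ge n k a (of_nat e * c)"
  shows "f \<in> mps_weight_ge n k a c"
proof -
  have "c \<le> mono_weight k a m" if nz: "f m \<noteq> 0" for m
  proof -
    obtain u where u: "lead_mono k a f u"
      using assms(1,2) nz by (rule ex_lead_mono)
    then have "mps_pow f e (\<lambda>i. e * u i) \<noteq> 0"
      using lead_mono_pow[OF assms(2) u] by (simp add: lead_mono_def)
    then have "of_nat e * c \<le> of_nat e * mono_weight k a u"
      using assms(4) by (auto simp: mps_weight_ge_def mono_weight_mult)
    then have "c \<le> mono_weight k a u"
      using assms(3) by simp
    also have "\<dots> \<le> mono_weight k a m"
      using u nz by (auto simp: lead_mono_def intro: mono_le_imp_weight_le)
    finally show ?thesis .
  qed
  then show ?thesis
    using assms(2) by (simp add: mps_weight_ge_def)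
qed

theorem lemma5p6:
  fixes I :: "((nat \<Rightarrow> nat) \<Rightarrow> 'K::field_char_0) set"
    and n k a1 :: nat and a :: "nat \<Rightarrow> rat"
  assumes "1 \<le> k" and "k \<le> n"
    and "is_mps_ideal n I"
    and "\<forall>i\<in>{1..k}. 0 < a i"
    and "\<forall>i j. 1 \<le> i \<and> i \<le> j \<and> j \<le> k \<longrightarrow> a i \<le> a j"
    and "1 \<le> a1" and "a 1 = of_nat a1"
  shows "admissible k a I \<longleftrightarrow>
         admissible k (\<lambda>i. a i * of_nat (fact (a1 - 1))) (coeff_ideal n I a1)"
proof -
  define N :: nat where "N = fact (a1 - 1)"
  have N_pos: "(0 :: rat) < of_nat N"
    by (simp add: N_def)
  have min: "\<forall>j\<in>{1..k}. a 1 \<le> a j"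
    using assms(5) by simp
  have I_mps: "I \<subseteq> mps n"
    using assms(3) by (simp add: is_mps_ideal_def)
  show ?thesis
    unfolding N_def[symmetric] admissible_scaled_iff_weight[OF N_pos]
  proof
    assume "admissible k a I"
    then have "I \<subseteq> mps_weight_ge n k a 1"
      using I_mps by (auto simp: admissible_iff_weight mps_weight_ge_def)
    then have "coeff_ideal n I a1 \<subseteq> mps_weight_ge n k a (of_nat N)"
      unfolding N_def using assms(6,7) min by (intro coeff_ideal_weight_ge) auto
    then show "\<forall>g\<in>coeff_ideal n I a1. \<forall>m. g m \<noteq> 0 \<longrightarrow> of_nat N \<le> mono_weight k a m"
      by (auto simp: mps_weight_ge_def)
  next
    assume C: "\<forall>g\<in>coeff_ideal n I a1. \<forall>m. g m \<noteq> 0 \<longrightarrow> of_nat N \<le> mono_weight k a m"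
    have "f \<in> mps_weight_ge n k a 1" if "f \<in> I" for f
    proof (rule mps_weight_ge_of_pow[OF assms(4)])
      show "f \<in> mps n" "0 < N"
        using that I_mps by (auto simp: N_def)
      have "mps_pow f N \<in> coeff_ideal n I a1"
        unfolding N_def using that I_mps assms(6) by (intro mps_pow_fact_mem_coeff_ideal) auto
      then show "mps_pow f N \<in> mps_weight_ge n k a (of_nat N * 1)"
        using C mps_pow_closed[OF \<open>f \<in> mps n\<close>] by (simp add: mps_weight_ge_def)
    qed
    then show "admissible k a I"
      by (auto simp: admissible_iff_weight mps_weight_ge_def)
  qed
qed

end
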